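(* Every transitive compact dynamical system $(X,T)$ is Li-Yorke chaotic.
   Context: A dynamical system $(X,T)$: $X$ is a compact metric space (metric $d$) with more than one point and without isolated points, $T:X\to X$ a continuous surjection. "Opene" means open and nonempty. $N_T(U,V)=\{n\in\mathbb{Z}_+:U\cap T^{-n}V\neq\varnothing\}$; $\mathcal{N}_T$ is the family of all subsets of $\mathbb{Z}_+$ containing some $N_T(U,V)$ with $U,V$ opene; $\omega_{\mathcal{N}_T}(x)=\bigcap_{F\in\mathcal{N}_T}\overline{\{T^ix:i\in F\}}$; $(X,T)$ is transitive compact if $\omega_{\mathcal{N}_T}(x)\neq\varnothing$ for all $x\in X$. A pair $(x,y)$ is proximal if $\liminf_{n\to\infty}d(T^nx,T^ny)=0$ and asymptotic if $\lim_{n\to\infty}d(T^nx,T^ny)=0$. $(X,T)$ is Li-Yorke chaotic if there exists an uncountable set $S\subset X$ such that every pair $(x,y)\in S\times S$ with $x\neq y$ is proximal but not asymptotic. *)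

theory Defs
  imports "HOL-Analysis.Analysis" "HOL-Library.Liminf_Limsup"
begin

definition dyn_system :: "'a::metric_space set \<Rightarrow> ('a \<Rightarrow> 'a) \<Rightarrow> bool" where
  "dyn_system X T \<longleftrightarrow> compact X \<and> (\<exists>x\<in>X. \<exists>y\<in>X. x \<noteq> y)
     \<and> (\<forall>x\<in>X. x islimpt X) \<and> continuous_on X T \<and> T ` X = X"

definition opene :: "'a::metric_space set \<Rightarrow> 'a set \<Rightarrow> bool" where
  "opene X U \<longleftrightarrow> openin (top_of_set X) U \<and> U \<noteq> {}"

definition hitting_times :: "'a set \<Rightarrow> ('a \<Rightarrow> 'a) \<Rightarrow> 'a set \<Rightarrow> 'a set \<Rightarrow> nat set" where
  "hitting_times X T U V = {n. U \<inter> {x\<in>X. (T^^n) x \<in> V} \<noteq> {}}"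

definition family_N :: "'a::metric_space set \<Rightarrow> ('a \<Rightarrow> 'a) \<Rightarrow> nat set set" where
  "family_N X T = {F. \<exists>U V. opene X U \<and> opene X V \<and> hitting_times X T U V \<subseteq> F}"

definition omega_N :: "'a::metric_space set \<Rightarrow> ('a \<Rightarrow> 'a) \<Rightarrow> 'a \<Rightarrow> 'a set" where
  "omega_N X T x = (\<Inter>F\<in>family_N X T. closure {(T^^i) x | i. i \<in> F})"

definition transitive_compact :: "'a::metric_space set \<Rightarrow> ('a \<Rightarrow> 'a) \<Rightarrow> bool" where
  "transitive_compact X T \<longleftrightarrow> (\<forall>x\<in>X. omega_N X T x \<noteq> {})"

definition proximal :: "('a::metric_space \<Rightarrow> 'a) \<Rightarrow> 'a \<Rightarrow> 'a \<Rightarrow> bool" where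
  "proximal T x y \<longleftrightarrow> liminf (\<lambda>n. ereal (dist ((T^^n) x) ((T^^n) y))) = 0"

definition asymptotic :: "('a::metric_space \<Rightarrow> 'a) \<Rightarrow> 'a \<Rightarrow> 'a \<Rightarrow> bool" where
  "asymptotic T x y \<longleftrightarrow> (\<lambda>n. dist ((T^^n) x) ((T^^n) y)) \<longlonglongrightarrow> 0"

definition li_yorke_chaotic :: "'a::metric_space set \<Rightarrow> ('a \<Rightarrow> 'a) \<Rightarrow> bool" where
  "li_yorke_chaotic X T \<longleftrightarrow> (\<exists>S\<subseteq>X. uncountable S \<and>
     (\<forall>x\<in>S. \<forall>y\<in>S. x \<noteq> y \<longrightarrow> proximal T x y \<and> \<not> asymptotic T x y))"

end

theory Submission
  imports Defs
begin

(*
  For s \<in> X pick z \<in> \<omega>_N(s). Because the orbit of s accumulates at z along every return-time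
  set N(U,V), for every opene U, target p \<in> X and time k some y \<in> U has T^n y near p while
  T^n s is near T^k z, at one common time n \<ge> k.  With p = T^k z this makes the points whose
  orbit comes \<epsilon>-close to that of s after time k a dense open set; with p far from T^k z
  (possible as X has two points) the same holds for "\<delta>-apart after time k".  By Baire, the
  points forming a Li-Yorke pair with every member of a countable set M are residual, hence
  some lie outside M, so a maximal set of pairwise Li-Yorke points (Zorn) is uncountable.
*)

lemma funpow_image_subset:
  assumes "T ` X \<subseteq> X" shows "(T^^n) ` X \<subseteq> X"
  by (induction n) (use assms in \<open>auto simp: image_subset_iff\<close>)

lemma funpow_image_eq:
  assumes "T ` X = X" shows "(T^^n) ` X = X"
  by (induction n) (simp_all add: image_comp [symmetric] assms del: o_apply)

lemma continuous_on_funpow: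
  assumes "continuous_on X T" "T ` X \<subseteq> X" shows "continuous_on X (T^^n)"
proof (induction n)
  case (Suc n)
  then show ?case
    using continuous_on_compose[OF Suc continuous_on_subset[OF assms(1)]]
      funpow_image_subset[OF assms(2)] by simp
qed simp

lemma Baire_compact:
  fixes X :: "'a::metric_space set"
  assumes "compact X" "countable \<G>"
    and dense_open: "\<And>A. A \<in> \<G> \<Longrightarrow> openin (top_of_set X) A \<and> X \<subseteq> closure A"
  shows "X \<subseteq> closure (X \<inter> \<Inter>\<G>)"
proof -
  have closure_in_X: "top_of_set X closure_of A = X \<inter> closure (X \<inter> A)" for A
    by (simp add: closure_of_subtopology)
  have "locally_compact_space (top_of_set X)"
    using assms(1) by (simp add: compact_imp_locally_compact_space compact_space_subtopology)
  moreover have "regular_space (top_of_set X)"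
    by (simp add: regular_space_euclidean regular_space_subtopology)
  moreover have "openin (top_of_set X) A \<and> top_of_set X closure_of A = topspace (top_of_set X)"
    if "A \<in> \<G>" for A
  proof -
    have "openin (top_of_set X) A" "X \<subseteq> closure A"
      using dense_open[OF that] by auto
    moreover have "X \<inter> A = A"
      using openin_imp_subset[OF \<open>openin (top_of_set X) A\<close>] by blast
    ultimately show ?thesis
      unfolding closure_in_X by auto
  qed
  ultimately have "top_of_set X closure_of \<Inter>\<G> = topspace (top_of_set X)"
    by (intro Baire_category[OF _ assms(2)]) blast+
  then have "X \<inter> closure (X \<inter> \<Inter>\<G>) = X"
    unfolding closure_in_X by simp
  then show ?thesis
    by blast
qed

lemma dense_Diff_singleton:
  assumes "\<forall>x\<in>X. x islimpt X"
  shows "X \<subseteq> closure (X - {s})"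
proof
  fix x assume "x \<in> X"
  show "x \<in> closure (X - {s})"
  proof (cases "x = s")
    case True
    have "s islimpt X"
      using assms \<open>x \<in> X\<close> True by blast
    then show ?thesis
      unfolding True by (rule iffD1[OF islimpt_in_closure])
  next
    case False
    with \<open>x \<in> X\<close> have "x \<in> X - {s}"
      by simp
    then show ?thesis
      by (rule subsetD[OF closure_subset])
  qed
qed

lemma uncountable_pairwise_subset:
  assumes extend: "\<And>M. M \<subseteq> X \<Longrightarrow> countable M \<Longrightarrow> pairwise R M \<Longrightarrow> \<exists>y\<in>X - M. \<forall>s\<in>M. R s y \<and> R y s"
  shows "\<exists>S\<subseteq>X. uncountable S \<and> pairwise R S"
proof -
  let ?\<A> = "{S. S \<subseteq> X \<and> pairwise R S}"
  have "\<forall>\<C>\<in>chains ?\<A>. \<Union>\<C> \<in> ?\<A>"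
  proof
    fix \<C> assume "\<C> \<in> chains ?\<A>"
    then have "\<C> \<subseteq> ?\<A>" "chain\<^sub>\<subseteq> \<C>"
      by (auto simp: chains_def)
    then have "pairwise R (\<Union>\<C>)"
      by (intro pairwise_chain_Union) auto
    with \<open>\<C> \<subseteq> ?\<A>\<close> show "\<Union>\<C> \<in> ?\<A>"
      by blast
  qed
  then obtain M where M: "M \<in> ?\<A>" and maximal: "\<forall>S\<in>?\<A>. M \<subseteq> S \<longrightarrow> S = M"
    using Zorn_Lemma[of ?\<A>] by blast
  have "uncountable M"
  proof
    assume "countable M"
    then obtain y where "y \<in> X - M" "\<forall>s\<in>M. R s y \<and> R y s"
      using extend[of M] M by auto
    then have "insert y M \<in> ?\<A>"
      using M by (auto simp: pairwise_insert)
    then show False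
      using maximal \<open>y \<in> X - M\<close> by blast
  qed
  then show ?thesis
    using M by blast
qed

lemma proximalI:
  assumes "\<And>\<epsilon> k. \<epsilon> > 0 \<Longrightarrow> \<exists>n\<ge>k. dist ((T^^n) x) ((T^^n) y) < \<epsilon>"
  shows "proximal T x y"
proof -
  let ?d = "\<lambda>n. ereal (dist ((T^^n) x) ((T^^n) y))"
  have "\<not> 0 < liminf ?d"
  proof
    assume "0 < liminf ?d"
    then obtain r where r: "0 < ereal r" "ereal r < liminf ?d"
      using ereal_dense2 by blast
    obtain k where "\<And>n. n \<ge> k \<Longrightarrow> r < dist ((T^^n) x) ((T^^n) y)"
      using less_LiminfD[OF r(2)] unfolding eventually_sequentially by auto
    moreover obtain n where "n \<ge> k" "dist ((T^^n) x) ((T^^n) y) < r"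
      using assms r(1) by auto
    ultimately show False
      by fastforce
  qed
  moreover have "0 \<le> liminf ?d"
    by (rule Liminf_bounded) simp
  ultimately show ?thesis
    unfolding proximal_def by simp
qed

lemma not_asymptoticI:
  assumes "\<delta> > 0" "\<And>k. \<exists>n\<ge>k. \<delta> < dist ((T^^n) x) ((T^^n) y)"
  shows "\<not> asymptotic T x y"
proof
  assume "asymptotic T x y"
  then obtain k where k: "\<And>n. n \<ge> k \<Longrightarrow> dist ((T^^n) x) ((T^^n) y) < \<delta>"
    using assms(1) unfolding asymptotic_def lim_sequentially by fastforce
  obtain n where "n \<ge> k" "\<delta> < dist ((T^^n) x) ((T^^n) y)"
    using assms(2) by blast
  then show False
    using k[of n] by linarith
qed

definition related_after :: "'a set \<Rightarrow> ('a \<Rightarrow> 'a) \<Rightarrow> ('a \<Rightarrow> 'a \<Rightarrow> bool) \<Rightarrow> 'a \<Rightarrow> nat \<Rightarrow> 'a set"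
  where "related_after X T R s k = {y \<in> X. \<exists>n\<ge>k. R ((T^^n) s) ((T^^n) y)}"

lemma openin_related_after:
  assumes "continuous_on X T" "T ` X \<subseteq> X" and "\<And>c. open {y. R c y}"
  shows "openin (top_of_set X) (related_after X T R s k)"
proof -
  have eq: "related_after X T R s k = (\<Union>n\<in>{k..}. X \<inter> (T^^n) -` {y. R ((T^^n) s) y})"
    by (auto simp: related_after_def)
  have "openin (top_of_set X) (X \<inter> (T^^n) -` {y. R ((T^^n) s) y})" for n
    using continuous_openin_preimage_gen[OF continuous_on_funpow[OF assms(1,2)] assms(3)] .
  then show ?thesis
    unfolding eq by (intro openin_Union) blast
qed

lemma omega_N_subset:
  assumes "compact X" "T ` X \<subseteq> X" "s \<in> X"
  shows "omega_N X T s \<subseteq> X"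
proof -
  have "opene X X"
    using assms(3) by (auto simp: opene_def)
  then have "omega_N X T s \<subseteq> closure {(T^^i) s | i. i \<in> hitting_times X T X X}"
    unfolding omega_N_def family_N_def by blast
  also have "\<dots> \<subseteq> X"
    using funpow_image_subset[OF assms(2)] assms
    by (intro closure_minimal) (auto simp: compact_imp_closed)
  finally show ?thesis .
qed

lemma omega_N_shadowing:
  assumes "dyn_system X T" "s \<in> X" "z \<in> omega_N X T s" "opene X U" "p \<in> X" "r > 0"
  shows "\<exists>y\<in>U. \<exists>n\<ge>k. dist ((T^^n) y) p < r \<and> dist ((T^^n) s) ((T^^k) z) < r"
proof -
  have "compact X" and img: "T ` X = X" and "continuous_on X T"
    using assms(1) by (auto simp: dyn_system_def)
  then have cont: "continuous_on X (T^^k)"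
    by (simp add: continuous_on_funpow)
  have "z \<in> X"
    using omega_N_subset[OF \<open>compact X\<close> _ assms(2)] assms(3) img by blast
  then obtain d where "d > 0" and d: "\<And>w. w \<in> X \<Longrightarrow> dist w z < d \<Longrightarrow> dist ((T^^k) w) ((T^^k) z) < r"
    using cont assms(6) unfolding continuous_on_iff by metis
  define V where "V = X \<inter> (T^^k) -` ball p r"
  have "opene X V"
  proof -
    obtain w where "w \<in> X" "(T^^k) w = p"
      using assms(5) funpow_image_eq[OF img, of k] by force
    then show ?thesis
      using continuous_openin_preimage_gen[OF cont open_ball] assms(6)
      by (auto simp: opene_def V_def)
  qed
  then have "z \<in> closure {(T^^i) s | i. i \<in> hitting_times X T U V}"
    using assms(3,4) unfolding omega_N_def family_N_def by blast
  then obtain i where i: "i \<in> hitting_times X T U V" "dist ((T^^i) s) z < d"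
    using \<open>d > 0\<close> unfolding closure_approachable by blast
  then obtain y where y: "y \<in> U" "(T^^i) y \<in> V"
    unfolding hitting_times_def by blast
  have "dist ((T^^(k + i)) y) p < r"
    using y(2) by (simp add: V_def funpow_add dist_commute)
  moreover have "dist ((T^^(k + i)) s) ((T^^k) z) < r"
    using d[OF _ i(2)] funpow_image_eq[OF img, of i] assms(2) by (auto simp: funpow_add)
  ultimately show ?thesis
    using y(1) le_add1 by blast
qed

lemma opene_Int_ball:
  assumes "x \<in> X" "e > 0"
  shows "opene X (X \<inter> ball x e)"
  using assms by (auto simp: opene_def intro: openin_open_Int)

lemma dense_related_after_close:
  assumes "dyn_system X T" "transitive_compact X T" "s \<in> X" "\<epsilon> > 0"
  shows "X \<subseteq> closure (related_after X T (\<lambda>a b. dist a b < \<epsilon>) s k)"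
proof
  fix x assume "x \<in> X"
  have "compact X" "T ` X = X"
    using assms(1) by (auto simp: dyn_system_def)
  obtain z where z: "z \<in> omega_N X T s"
    using assms(2,3) unfolding transitive_compact_def by blast
  have "z \<in> X"
    using omega_N_subset[OF \<open>compact X\<close> _ assms(3)] z \<open>T ` X = X\<close> by blast
  then have "(T^^k) z \<in> X"
    using funpow_image_eq[OF \<open>T ` X = X\<close>] by blast
  have "\<exists>y\<in>related_after X T (\<lambda>a b. dist a b < \<epsilon>) s k. dist y x < e" if "e > 0" for e
  proof -
    obtain y n where "y \<in> X" "dist y x < e" "n \<ge> k"
        "dist ((T^^n) y) ((T^^k) z) < \<epsilon>/2" "dist ((T^^n) s) ((T^^k) z) < \<epsilon>/2"
      using omega_N_shadowing[OF assms(1,3) z opene_Int_ball[OF \<open>x \<in> X\<close> \<open>e > 0\<close>]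
          \<open>(T^^k) z \<in> X\<close>, of "\<epsilon>/2" k] assms(4)
      by (auto simp: dist_commute)
    moreover from this have "dist ((T^^n) s) ((T^^n) y) < \<epsilon>"
      using dist_triangle_half_l by blast
    ultimately show ?thesis
      unfolding related_after_def by blast
  qed
  then show "x \<in> closure (related_after X T (\<lambda>a b. dist a b < \<epsilon>) s k)"
    unfolding closure_approachable by blast
qed

lemma dense_related_after_far:
  assumes "dyn_system X T" "transitive_compact X T" "s \<in> X"
    and "a \<in> X" "b \<in> X" "\<delta> > 0" "4 * \<delta> \<le> dist a b"
  shows "X \<subseteq> closure (related_after X T (\<lambda>a b. \<delta> < dist a b) s k)"
proof
  fix x assume "x \<in> X"
  obtain z where z: "z \<in> omega_N X T s"
    using assms(2,3) unfolding transitive_compact_def by blast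
  define c where "c = (T^^k) z"
  have "2 * \<delta> \<le> dist a c \<or> 2 * \<delta> \<le> dist b c"
    using assms(7) dist_triangle2[of a b c] by linarith
  then obtain p where "p \<in> X" and p: "2 * \<delta> \<le> dist p c"
    using assms(4,5) by blast
  have "\<exists>y\<in>related_after X T (\<lambda>a b. \<delta> < dist a b) s k. dist y x < e" if "e > 0" for e
  proof -
    obtain y n where "y \<in> X" "dist y x < e" "n \<ge> k"
        "dist ((T^^n) y) p < \<delta>/2" "dist ((T^^n) s) c < \<delta>/2"
      using omega_N_shadowing[OF assms(1,3) z opene_Int_ball[OF \<open>x \<in> X\<close> \<open>e > 0\<close>]
          \<open>p \<in> X\<close>, of "\<delta>/2" k] assms(6)
      by (auto simp: c_def dist_commute)
    moreover from this have "\<delta> < dist ((T^^n) s) ((T^^n) y)"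
      using p dist_triangle[of p c "(T^^n) y"] dist_triangle[of "(T^^n) y" c "(T^^n) s"]
        dist_commute[of p "(T^^n) y"] dist_commute[of "(T^^n) s" c]
        dist_commute[of "(T^^n) s" "(T^^n) y"]
      by linarith
    ultimately show ?thesis
      unfolding related_after_def by blast
  qed
  then show "x \<in> closure (related_after X T (\<lambda>a b. \<delta> < dist a b) s k)"
    unfolding closure_approachable by blast
qed

definition li_yorke_pair :: "('a::metric_space \<Rightarrow> 'a) \<Rightarrow> 'a \<Rightarrow> 'a \<Rightarrow> bool"
  where "li_yorke_pair T x y \<longleftrightarrow> proximal T x y \<and> \<not> asymptotic T x y"

lemma li_yorke_pair_commute: "li_yorke_pair T x y \<longleftrightarrow> li_yorke_pair T y x"
proof -
  have "\<And>n. dist ((T^^n) x) ((T^^n) y) = dist ((T^^n) y) ((T^^n) x)"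
    by (rule dist_commute)
  then show ?thesis
    unfolding li_yorke_pair_def proximal_def asymptotic_def by simp
qed

lemma li_yorke_pairI:
  assumes "\<delta> > 0"
    and close: "\<And>k m. y \<in> related_after X T (\<lambda>a b. dist a b < inverse (Suc m)) s k"
    and far: "\<And>k. y \<in> related_after X T (\<lambda>a b. \<delta> < dist a b) s k"
  shows "li_yorke_pair T s y"
proof -
  have "proximal T s y"
  proof (rule proximalI)
    fix \<epsilon> :: real and k assume "\<epsilon> > 0"
    then obtain m where "inverse (Suc m) < \<epsilon>"
      using reals_Archimedean by blast
    then show "\<exists>n\<ge>k. dist ((T^^n) s) ((T^^n) y) < \<epsilon>"
      using close[where k = k and m = m] unfolding related_after_def by force
  qed
  moreover have "\<not> asymptotic T s y"
    using not_asymptoticI[OF \<open>\<delta> > 0\<close>] far unfolding related_after_def by blast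
  ultimately show ?thesis
    by (simp add: li_yorke_pair_def)
qed

lemma li_yorke_pair_extension:
  assumes ds: "dyn_system X T" and tc: "transitive_compact X T" and "countable M" "M \<subseteq> X"
  shows "\<exists>y\<in>X - M. \<forall>s\<in>M. li_yorke_pair T s y"
proof -
  have "compact X" "continuous_on X T" "T ` X \<subseteq> X" and perfect: "\<forall>x\<in>X. x islimpt X"
    using ds by (auto simp: dyn_system_def)
  obtain a b where "a \<in> X" "b \<in> X" "a \<noteq> b"
    using ds by (auto simp: dyn_system_def)
  define \<delta> where "\<delta> = dist a b / 4"
  have "\<delta> > 0" "4 * \<delta> \<le> dist a b"
    using \<open>a \<noteq> b\<close> by (auto simp: \<delta>_def)
  define Close where "Close = (\<lambda>(s, k, m). related_after X T (\<lambda>a b. dist a b < inverse (Suc m)) s k)"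
  define Far where "Far = (\<lambda>(s, k). related_after X T (\<lambda>a b. \<delta> < dist a b) s k)"
  define \<G> where "\<G> = Close ` (M \<times> UNIV) \<union> Far ` (M \<times> UNIV) \<union> (\<lambda>s. X - {s}) ` M"
  have open_close: "open {y. dist c y < \<epsilon>}" and open_far: "open {y. \<delta> < dist c y}"
    for c :: 'a and \<epsilon> :: real
    by (intro open_Collect_less continuous_intros)+
  have "openin (top_of_set X) A \<and> X \<subseteq> closure A" if "A \<in> \<G>" for A
    using that unfolding \<G>_def
  proof (elim UnE imageE)
    fix skm assume "A = Close skm" "skm \<in> M \<times> UNIV"
    then obtain s k m where "A = related_after X T (\<lambda>a b. dist a b < inverse (Suc m)) s k" "s \<in> X"
      using \<open>M \<subseteq> X\<close> by (auto simp: Close_def)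
    then show ?thesis
      using openin_related_after[OF \<open>continuous_on X T\<close> \<open>T ` X \<subseteq> X\<close> open_close]
        dense_related_after_close[OF ds tc \<open>s \<in> X\<close>, of "inverse (Suc m)" k] by simp
  next
    fix sk assume "A = Far sk" "sk \<in> M \<times> UNIV"
    then obtain s k where "A = related_after X T (\<lambda>a b. \<delta> < dist a b) s k" "s \<in> X"
      using \<open>M \<subseteq> X\<close> by (auto simp: Far_def)
    then show ?thesis
      using openin_related_after[OF \<open>continuous_on X T\<close> \<open>T ` X \<subseteq> X\<close> open_far]
        dense_related_after_far[OF ds tc \<open>s \<in> X\<close> \<open>a \<in> X\<close> \<open>b \<in> X\<close> \<open>\<delta> > 0\<close> \<open>4 * \<delta> \<le> dist a b\<close>]
      by simp
  next
    fix s assume "A = X - {s}"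
    moreover have "openin (top_of_set X) (X - {s})"
      by (intro openin_delete openin_subtopology_self)
    ultimately show ?thesis
      using dense_Diff_singleton[OF perfect, of s] by simp
  qed
  moreover have "countable \<G>"
    using \<open>countable M\<close> by (simp add: \<G>_def)
  ultimately have "X \<subseteq> closure (X \<inter> \<Inter>\<G>)"
    by (rule Baire_compact[OF \<open>compact X\<close>, rotated])
  then have "X \<inter> \<Inter>\<G> \<noteq> {}"
    using \<open>a \<in> X\<close> by auto
  then obtain y where "y \<in> X" and y: "\<And>A. A \<in> \<G> \<Longrightarrow> y \<in> A"
    by blast
  have "y \<notin> M"
    using y[of "X - {y}"] by (auto simp: \<G>_def)
  moreover have "li_yorke_pair T s y" if "s \<in> M" for s
  proof (rule li_yorke_pairI[OF \<open>\<delta> > 0\<close>])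
    fix k m
    have "Close (s, k, m) \<in> \<G>" "Far (s, k) \<in> \<G>"
      using that unfolding \<G>_def by blast+
    then show "y \<in> related_after X T (\<lambda>a b. dist a b < inverse (Suc m)) s k"
      and "y \<in> related_after X T (\<lambda>a b. \<delta> < dist a b) s k"
      using y unfolding Close_def Far_def by simp_all
  qed
  ultimately show ?thesis
    using \<open>y \<in> X\<close> by blast
qed

theorem proposition6p6:
  fixes X :: "'a::metric_space set" and T :: "'a \<Rightarrow> 'a"
  assumes "dyn_system X T" and "transitive_compact X T"
  shows "li_yorke_chaotic X T"
proof -
  have "\<exists>S\<subseteq>X. uncountable S \<and> pairwise (li_yorke_pair T) S"
  proof (rule uncountable_pairwise_subset)
    fix M assume "M \<subseteq> X" "countable M"
    then obtain y where "y \<in> X - M" "\<forall>s\<in>M. li_yorke_pair T s y"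
      using li_yorke_pair_extension[OF assms] by blast
    then show "\<exists>y\<in>X - M. \<forall>s\<in>M. li_yorke_pair T s y \<and> li_yorke_pair T y s"
      using li_yorke_pair_commute by blast
  qed
  then show ?thesis
    unfolding li_yorke_chaotic_def pairwise_def li_yorke_pair_def .
qed

end
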